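(* In the hierarchical partition construction described in the context, let $S\in\mathcal S_j$ be a child of $S^*\in\mathcal S_{j+1}$ and suppose $S$ knows $S'\in\mathcal S_j$. Then either $S'\subseteq S^*$, or $S^*$ knows the parent of $S'$ (the unique set of $\mathcal S_{j+1}$ containing $S'$).
   Context: Let $(V,d)$ be a finite metric space with $|V|\ge 2$ which is doubling with constant $\lambda$: for every $v\in V$ and $r>0$ the open ball $B_{2r}(v)=\{u:d(u,v)<2r\}$ is contained in the union of at most $\lambda$ open balls $B_r(w)$, $w\in V$. Fix an integer $\eta\ge2$ and a real $\tau$ with $1+\frac{1}{2^{\eta-1}-1}\le\tau\le 2^{\eta}$. For $L\subseteq V$ and $r>0$, a greedy partition of $L$ with parameter $r$ is obtained by: set $L_0=L$; while $L_i\ne\emptyset$ choose any $v_i\in L_i$, let $P_i=\{u\in L_i: d(u,v_i)<2^{-\eta-1}r\}$ with leader $v_i$, and set $L_{i+1}=L_i\setminus P_i$. Hierarchical partition construction: choose $r_0$ with $0<r_0<\min_{u\ne v}d(u,v)$ and put $r_j=\tau^j r_0$. Let $\mathcal S_0=\{\{v\}:v\in V\}$, the leader of $\{v\}$ being $v$. While $\mathcal S_j$ has more than one element: let $L_j$ be the set of leaders of the sets in $\mathcal S_j$, let $\mathcal S'_{j+1}$ be a greedy partition of $L_j$ with parameter $2r_{j+1}$, and let $\mathcal S_{j+1}$ consist, for each $P\in\mathcal S'_{j+1}$, of the set $\bigcup\{S\in\mathcal S_j:\mathrm{leader}(S)\in P\}$, whose leader is defined to be the leader of $P$. Each $\mathcal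 S_j$ is a partition of $V$ refined by $\mathcal S_{j}$ of the previous level; $S\in\mathcal S_j$ is a child of $S^*\in\mathcal S_{j+1}$ if $S\subseteq S^*$ ($S^*$ is then its parent). For $S,S'\in\mathcal S_j$, $S$ knows $S'$ (at level $j$) if there are $v\in S$, $u\in S'$ with $d(v,u)<r_j$. *)

theory Defs
  imports Complex_Main
begin

definition finite_metric :: "'a set \<Rightarrow> ('a \<Rightarrow> 'a \<Rightarrow> real) \<Rightarrow> bool" where
  "finite_metric V d \<longleftrightarrow> finite V \<and>
     (\<forall>u\<in>V. \<forall>v\<in>V. d u v = 0 \<longleftrightarrow> u = v) \<and>
     (\<forall>u\<in>V. \<forall>v\<in>V. d u v = d v u) \<and>
     (\<forall>u\<in>V. \<forall>v\<in>V. \<forall>w\<in>V. d u w \<le> d u v + d v w)"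

definition oball :: "'a set \<Rightarrow> ('a \<Rightarrow> 'a \<Rightarrow> real) \<Rightarrow> 'a \<Rightarrow> real \<Rightarrow> 'a set" where
  "oball V d v r = {u\<in>V. d u v < r}"

definition doubling :: "'a set \<Rightarrow> ('a \<Rightarrow> 'a \<Rightarrow> real) \<Rightarrow> nat \<Rightarrow> bool" where
  "doubling V d lam \<longleftrightarrow> (\<forall>v\<in>V. \<forall>r>0. \<exists>W. W \<subseteq> V \<and> card W \<le> lam \<and>
       oball V d v (2*r) \<subseteq> (\<Union>w\<in>W. oball V d w r))"

text \<open>Greedy partitions of L with parameter r (and fixed eta): a set of pairs
  (leader, part). All possible runs (choices of leaders) are captured.\<close>
inductive greedy_partition :: "('a \<Rightarrow> 'a \<Rightarrow> real) \<Rightarrow> nat \<Rightarrow> real \<Rightarrow> 'a set \<Rightarrow> ('a \<times> 'a set) set \<Rightarrow> bool"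
  for d eta r where
  gp_empty: "greedy_partition d eta r {} {}"
| gp_step: "\<lbrakk> v \<in> L; P = {u\<in>L. d u v < r / 2^(eta+1)};
             greedy_partition d eta r (L - P) Q \<rbrakk>
           \<Longrightarrow> greedy_partition d eta r L (insert (v, P) Q)"

definition next_level :: "('a \<Rightarrow> 'a \<Rightarrow> real) \<Rightarrow> nat \<Rightarrow> real \<Rightarrow> ('a \<times> 'a set) set \<Rightarrow> ('a \<times> 'a set) set \<Rightarrow> bool" where
  "next_level d eta rr S T \<longleftrightarrow> (\<exists>S'. greedy_partition d eta rr (fst ` S) S' \<and>
      T = {(v, \<Union>{X. \<exists>w. (w, X) \<in> S \<and> w \<in> P}) | v P. (v, P) \<in> S'})"

text \<open>S 0, ..., S N is a (prefix of a) run of the hierarchical partition construction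
  with r_j = tau^j r0; each level is a set of pairs (leader, set).\<close>
definition hier_run :: "'a set \<Rightarrow> ('a \<Rightarrow> 'a \<Rightarrow> real) \<Rightarrow> nat \<Rightarrow> real \<Rightarrow> real \<Rightarrow> (nat \<Rightarrow> ('a \<times> 'a set) set) \<Rightarrow> nat \<Rightarrow> bool" where
  "hier_run V d eta tau r0 S N \<longleftrightarrow> S 0 = {(v, {v}) | v. v \<in> V} \<and>
     (\<forall>i<N. card (S i) > 1 \<and> next_level d eta (2 * (tau ^ (Suc i) * r0)) (S i) (S (Suc i)))"

definition knows :: "('a \<Rightarrow> 'a \<Rightarrow> real) \<Rightarrow> real \<Rightarrow> 'a set \<Rightarrow> 'a set \<Rightarrow> bool" where
  "knows d r A B \<longleftrightarrow> (\<exists>v\<in>A. \<exists>u\<in>B. d v u < r)"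

end

theory Submission
  imports Defs
begin

(* If S knows S' at level j, there are points v in S and u in S'
   with d v u < r_j.  Since S is contained in its parent S* and S' in its parent,
   the same pair witnesses that S* knows the parent of S' at any radius at least
   r_j.  The radii r_j = tau^j r0 are non-decreasing because the lower bound on
   tau forces tau >= 1.  Hence the second alternative of the lemma always holds. *)

lemma knows_mono:
  assumes "knows d r A B" and "A \<subseteq> A'" and "B \<subseteq> B'" and "r \<le> r'"
  shows "knows d r' A' B'"
proof -
  obtain v u where "v \<in> A" "u \<in> B" "d v u < r"
    using assms(1) unfolding knows_def by blast
  with assms(2-4) show ?thesis
    unfolding knows_def by force
qed

text \<open>The lower bound on the ratio tau forces tau \<ge> 1 (the subtracted fraction
  has a nonnegative denominator, since 2^k \<ge> 1).\<close>
lemma ratio_ge_one: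
  fixes tau :: real
  assumes "1 + 1 / (2 ^ (eta - 1) - 1) \<le> tau"
  shows "1 \<le> tau"
proof -
  have "(1::real) \<le> 2 ^ (eta - 1)" by simp
  then have "0 \<le> 1 / ((2::real) ^ (eta - 1) - 1)" by simp
  with assms show ?thesis by linarith
qed

lemma radius_step_mono:
  fixes tau r0 :: real
  assumes "1 \<le> tau" and "0 \<le> r0"
  shows "tau ^ j * r0 \<le> tau ^ Suc j * r0"
  using assms by (intro mult_right_mono power_increasing) auto

theorem lemma4:
  fixes V :: "'a set" and d :: "'a \<Rightarrow> 'a \<Rightarrow> real" and lam :: nat
    and eta :: nat and tau r0 :: real
    and S :: "nat \<Rightarrow> ('a \<times> 'a set) set" and N j :: nat
    and a as b bs :: 'a and A As B Bs :: "'a set"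
  assumes metric: "finite_metric V d" and card_V: "card V \<ge> 2"
    and dbl: "doubling V d lam"
    and eta: "eta \<ge> 2"
    and tau_lo: "1 + 1 / (2 ^ (eta - 1) - 1) \<le> tau" and tau_hi: "tau \<le> 2 ^ eta"
    and r0_pos: "0 < r0" and r0_min: "\<forall>u\<in>V. \<forall>v\<in>V. u \<noteq> v \<longrightarrow> r0 < d u v"
    and run: "hier_run V d eta tau r0 S N"
    and j: "j < N"
    and SA: "(a, A) \<in> S j" and SAs: "(as, As) \<in> S (Suc j)" and child: "A \<subseteq> As"
    and SB: "(b, B) \<in> S j" and knowsAB: "knows d (tau ^ j * r0) A B"
    and SBs: "(bs, Bs) \<in> S (Suc j)" and parent: "B \<subseteq> Bs"
  shows "B \<subseteq> As \<or> knows d (tau ^ (Suc j) * r0) As Bs"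
proof -
  have "tau ^ j * r0 \<le> tau ^ Suc j * r0"
    using radius_step_mono ratio_ge_one[OF tau_lo] r0_pos by simp
  then have "knows d (tau ^ Suc j * r0) As Bs"
    using knows_mono[OF knowsAB child parent] by blast
  then show ?thesis ..
qed

end
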